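(* Assume $\operatorname{rk}L=2$ and $\omega$ non-degenerate. Let $u\in L$ be primitive and let $W,W'\in\mathcal Q[L^*]$ be Laurent polynomials with $W=\mu_u^*(W')$. Then $W\in\mathbb Z[L^*]$ if and only if $W'\in\mathbb Z[L^*]$.
   Context: $L$ is a lattice with skew-symmetric integral bilinear form $\omega$, $L^*=\mathrm{Hom}(L,\mathbb Z)$, $(\cdot,\cdot)$ the canonical pairing. $\mathcal Q=\mathbb Q(e^{2\pi i\mathbb Q})$ is $\mathbb Q$ with all roots of unity adjoined; $\mathcal Q[L^*]$ (resp. $\mathbb Z[L^*]$) is the group algebra of $L^*$ over $\mathcal Q$ (resp. $\mathbb Z$) with monomials $X^m$, and $\mathbb K_L$ is the fraction field of $\mathcal Q[L^*]$. For $v\in L$, $\mu_v^*$ is the $\mathcal Q$-algebra automorphism of $\mathbb K_L$ with $\mu_v^*(X^m)=X^m(1+X^{\omega(\cdot,v)})^{-(m,v)}$, where $\omega(\cdot,v)\in L^*$ is $w\mapsto\omega(w,v)$. A vector is primitive if nonzero and not a multiple $kw$, $k>1$. *)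

theory Defs
  imports Complex_Main "HOL-Library.Poly_Mapping" "HOL-Library.Product_Plus"
begin

text \<open>The lattice L of rank 2 is identified with int \<times> int (choice of a basis);
  L^* = Hom(L,Z) is identified with int \<times> int via the dual basis.\<close>

definition pairing :: "int \<times> int \<Rightarrow> int \<times> int \<Rightarrow> int" where
  "pairing m v = fst m * fst v + snd m * snd v"

definition skew_bilinear :: "(int \<times> int \<Rightarrow> int \<times> int \<Rightarrow> int) \<Rightarrow> bool" where
  "skew_bilinear \<omega> \<longleftrightarrow>
     (\<forall>v v' w. \<omega> (v + v') w = \<omega> v w + \<omega> v' w) \<and>
     (\<forall>v w w'. \<omega> v (w + w') = \<omega> v w + \<omega> v w') \<and>
     (\<forall>v w. \<omega> v w = - \<omega> w v)"

definition nondegenerate :: "(int \<times> int \<Rightarrow> int \<times> int \<Rightarrow> int) \<Rightarrow> bool" where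
  "nondegenerate \<omega> \<longleftrightarrow> (\<forall>v. (\<forall>w. \<omega> v w = 0) \<longrightarrow> v = 0)"

definition primitive :: "int \<times> int \<Rightarrow> bool" where
  "primitive v \<longleftrightarrow> v \<noteq> 0 \<and> \<not> (\<exists>k::int. \<exists>w. k > 1 \<and> v = (k * fst w, k * snd w))"

text \<open>\<omega>(\<cdot>,v) as an element of L^*, in dual-basis coordinates.\<close>
definition omega_dual :: "(int \<times> int \<Rightarrow> int \<times> int \<Rightarrow> int) \<Rightarrow> int \<times> int \<Rightarrow> int \<times> int" where
  "omega_dual \<omega> v = (\<omega> (1,0) v, \<omega> (0,1) v)"

definition Qcyc :: "complex set" where
  "Qcyc = \<Inter>{F. \<rat> \<subseteq> F \<and> {z. \<exists>n::nat. n > 0 \<and> z ^ n = 1} \<subseteq> F \<and>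
      (\<forall>x\<in>F. \<forall>y\<in>F. x + y \<in> F \<and> x * y \<in> F \<and> - x \<in> F \<and> inverse x \<in> F)}"

type_synonym laurent = "(int \<times> int) \<Rightarrow>\<^sub>0 complex"

definition Xm :: "int \<times> int \<Rightarrow> laurent" where
  "Xm m = Poly_Mapping.single m 1"

definition in_QL :: "laurent \<Rightarrow> bool" where
  "in_QL W \<longleftrightarrow> (\<forall>m. Poly_Mapping.lookup W m \<in> Qcyc)"

definition in_ZL :: "laurent \<Rightarrow> bool" where
  "in_ZL W \<longleftrightarrow> (\<forall>m. Poly_Mapping.lookup W m \<in> \<int>)"

text \<open>W = \<mu>_v^*(W') in the fraction field K_L, with
  \<mu>_v^*(X^m) = X^m (1 + X^{\<omega>(\<cdot>,v)})^{-(m,v)}.  Equality in the fraction field is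
  expressed by clearing the denominator (1 + X^{\<omega>(\<cdot>,v)})^N for a sufficiently
  large N.\<close>
definition mutation_eq :: "(int \<times> int \<Rightarrow> int \<times> int \<Rightarrow> int) \<Rightarrow> int \<times> int \<Rightarrow> laurent \<Rightarrow> laurent \<Rightarrow> bool" where
  "mutation_eq \<omega> v W W' \<longleftrightarrow>
    (\<exists>N::nat. (\<forall>m \<in> Poly_Mapping.keys W'. pairing m v \<le> int N) \<and>
       W * (1 + Xm (omega_dual \<omega> v)) ^ N =
       (\<Sum>m \<in> Poly_Mapping.keys W'. Poly_Mapping.single m (Poly_Mapping.lookup W' m) *
            (1 + Xm (omega_dual \<omega> v)) ^ nat (int N - pairing m v)))"

end

theory Submission
  imports Defs
begin

(* Grade Laurent polynomials by k = (m, u). As (\<omega>(\<cdot>,u), u) = \<omega>(u,u) = 0, multiplication by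
   P = 1 + X^n with n = \<omega>(\<cdot>,u) preserves this grading, so after clearing denominators the
   relation W = \<mu>_u^*(W') reads W_k P^N = W'_k P^(N-k) in every degree k. Multiplication by P
   preserves integrality, and so does division: the coefficient of X^m in F P is F_m + F_(m-n),
   so a non-integral coefficient of F with least (m, n) cannot exist, n being nonzero by
   non-degeneracy. *)

lemma additive_int_eq_mult:
  fixes g :: "int \<Rightarrow> 'a::ring_1"
  assumes "additive g"
  shows "g k = of_int k * g 1"
proof (induction k rule: int_induct[where k = 0])
  case base
  then show ?case using additive.zero[OF assms] by simp
next
  case (step1 i)
  then show ?case using additive.add[OF assms, of i 1] by (simp add: distrib_right)
next
  case (step2 i)
  then show ?case using additive.diff[OF assms, of i 1] by (simp add: left_diff_distrib)
qed

lemma additive_int_pair_eq: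
  fixes f :: "int \<times> int \<Rightarrow> int"
  assumes "additive f"
  shows "f (a, b) = a * f (1, 0) + b * f (0, 1)"
proof -
  have "additive (\<lambda>i. f (i, 0))" "additive (\<lambda>i. f (0, i))"
    using additive.add[OF assms, of "(_, 0)" "(_, 0)"] additive.add[OF assms, of "(0, _)" "(0, _)"]
    by (simp_all add: additive_def)
  then have "f (a, 0) = a * f (1, 0)" "f (0, b) = b * f (0, 1)"
    by (simp_all add: additive_int_eq_mult[of "\<lambda>i. f (i, 0)" a] additive_int_eq_mult[of "\<lambda>i. f (0, i)" b])
  moreover have "f (a, b) = f (a, 0) + f (0, b)"
    using additive.add[OF assms, of "(a, 0)" "(0, b)"] by simp
  ultimately show ?thesis by simp
qed

lemma pairing_omega_dual:
  assumes "skew_bilinear \<omega>"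
  shows "pairing (omega_dual \<omega> v) w = \<omega> w v"
proof -
  have "additive (\<lambda>x. \<omega> x v)"
    using assms unfolding skew_bilinear_def additive_def by blast
  then have "\<omega> (fst w, snd w) v = fst w * \<omega> (1, 0) v + snd w * \<omega> (0, 1) v"
    by (rule additive_int_pair_eq)
  then show ?thesis by (simp add: pairing_def omega_dual_def mult.commute)
qed

lemma pairing_omega_dual_self:
  assumes "skew_bilinear \<omega>"
  shows "pairing (omega_dual \<omega> v) v = 0"
proof -
  have "\<omega> v v = - \<omega> v v"
    using assms unfolding skew_bilinear_def by blast
  then show ?thesis
    by (simp add: pairing_omega_dual[OF assms])
qed

lemma omega_dual_nonzero:
  assumes "skew_bilinear \<omega>" "nondegenerate \<omega>" "v \<noteq> 0"
  shows "omega_dual \<omega> v \<noteq> 0"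
proof
  assume "omega_dual \<omega> v = 0"
  then have "\<omega> w v = 0" for w
    using pairing_omega_dual[OF assms(1), of v w] by (simp add: pairing_def)
  then have "\<omega> v w = 0" for w
    using assms(1) unfolding skew_bilinear_def by (metis neg_equal_0_iff_equal)
  then show False
    using assms(2,3) unfolding nondegenerate_def by blast
qed

lemma lookup_mult_Xm:
  "Poly_Mapping.lookup (F * Xm n) m = Poly_Mapping.lookup F (m - n)"
proof -
  have "Sum_any (\<lambda>q. Poly_Mapping.lookup (Xm n) q when m = l + q) = (1 when l = m - n)" for l
  proof -
    have "Sum_any (\<lambda>q. Poly_Mapping.lookup (Xm n) q when m = l + q)
        = Sum_any (\<lambda>q. (1 when l = m - n) when q = n)"
      by (rule Sum_any.cong) (auto simp: Xm_def lookup_single when_def algebra_simps)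
    then show ?thesis by simp
  qed
  then have "Poly_Mapping.lookup (F * Xm n) m = Sum_any (\<lambda>l. Poly_Mapping.lookup F l when l = m - n)"
    by (simp add: lookup_mult mult_when)
  then show ?thesis by simp
qed

lemma lookup_mult_one_plus_Xm:
  "Poly_Mapping.lookup (F * (1 + Xm n)) m = Poly_Mapping.lookup F m + Poly_Mapping.lookup F (m - n)"
  by (simp add: distrib_left lookup_add lookup_mult_Xm)

lemma in_ZL_mult_one_plus_Xm_iff:
  assumes "n \<noteq> 0"
  shows "in_ZL (F * (1 + Xm n)) \<longleftrightarrow> in_ZL F"
proof
  assume prod: "in_ZL (F * (1 + Xm n))"
  show "in_ZL F"
  proof (rule ccontr)
    define B where "B = {m. Poly_Mapping.lookup F m \<notin> \<int>}"
    define m where "m = arg_min_on (\<lambda>x. pairing x n) B"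
    assume "\<not> in_ZL F"
    then have "B \<noteq> {}"
      by (simp add: B_def in_ZL_def)
    have "B \<subseteq> Poly_Mapping.keys F"
      by (auto simp: B_def in_keys_iff)
    then have "finite B"
      by (rule finite_subset) simp
    then have "m \<in> B" and m_min: "\<And>x. x \<in> B \<Longrightarrow> \<not> pairing x n < pairing m n"
      using arg_min_if_finite[OF _ \<open>B \<noteq> {}\<close>, of "\<lambda>x. pairing x n"] unfolding m_def by blast+
    have "pairing (m - n) n < pairing m n"
      using assms by (cases n) (simp add: pairing_def algebra_simps zero_prod_def sum_squares_gt_zero_iff)
    then have "Poly_Mapping.lookup F (m - n) \<in> \<int>"
      using m_min[of "m - n"] by (auto simp: B_def)
    moreover have "Poly_Mapping.lookup F m + Poly_Mapping.lookup F (m - n) \<in> \<int>"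
      using prod unfolding in_ZL_def lookup_mult_one_plus_Xm by blast
    ultimately have "Poly_Mapping.lookup F m \<in> \<int>"
      by (metis Ints_diff add_diff_cancel_right')
    with \<open>m \<in> B\<close> show False
      by (simp add: B_def)
  qed
next
  show "in_ZL F \<Longrightarrow> in_ZL (F * (1 + Xm n))"
    unfolding in_ZL_def lookup_mult_one_plus_Xm by (blast intro: Ints_add)
qed

lemma in_ZL_mult_power_iff:
  assumes "n \<noteq> 0"
  shows "in_ZL (F * (1 + Xm n) ^ e) \<longleftrightarrow> in_ZL F"
proof (induction e arbitrary: F)
  case (Suc e)
  then show ?case
    by (simp add: mult.assoc[symmetric] in_ZL_mult_one_plus_Xm_iff[OF assms])
qed simp

definition graded_part :: "int \<times> int \<Rightarrow> int \<Rightarrow> laurent \<Rightarrow> laurent" where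
  "graded_part u k F =
     Abs_poly_mapping (\<lambda>m. if pairing m u = k then Poly_Mapping.lookup F m else 0)"

lemma lookup_graded_part:
  "Poly_Mapping.lookup (graded_part u k F) m = (if pairing m u = k then Poly_Mapping.lookup F m else 0)"
proof -
  have "finite {m. (if pairing m u = k then Poly_Mapping.lookup F m else 0) \<noteq> 0}"
    by (rule finite_subset[OF _ finite_keys[of F]]) (auto simp: in_keys_iff)
  then show ?thesis
    by (simp add: graded_part_def)
qed

lemma graded_part_single:
  "graded_part u k (Poly_Mapping.single m c) = (if pairing m u = k then Poly_Mapping.single m c else 0)"
  by (rule poly_mapping_eqI) (auto simp: lookup_graded_part lookup_single when_def)

lemma graded_part_sum: "graded_part u k (sum F A) = (\<Sum>x\<in>A. graded_part u k (F x))"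
  by (rule poly_mapping_eqI) (simp add: lookup_graded_part lookup_sum)

lemma graded_part_mult_one_plus_Xm:
  assumes "pairing n u = 0"
  shows "graded_part u k (F * (1 + Xm n)) = graded_part u k F * (1 + Xm n)"
proof (rule poly_mapping_eqI)
  fix m
  have "pairing (m - n) u = pairing m u"
    using assms by (simp add: pairing_def algebra_simps)
  then show "Poly_Mapping.lookup (graded_part u k (F * (1 + Xm n))) m
           = Poly_Mapping.lookup (graded_part u k F * (1 + Xm n)) m"
    by (simp add: lookup_graded_part lookup_mult_one_plus_Xm)
qed

lemma graded_part_mult_power:
  assumes "pairing n u = 0"
  shows "graded_part u k (F * (1 + Xm n) ^ e) = graded_part u k F * (1 + Xm n) ^ e"
proof (induction e arbitrary: F)
  case (Suc e)
  then show ?case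
    by (simp add: mult.assoc[symmetric] graded_part_mult_one_plus_Xm[OF assms])
qed simp

lemma in_ZL_iff_graded_parts: "in_ZL F \<longleftrightarrow> (\<forall>k. in_ZL (graded_part u k F))"
proof
  show "in_ZL F \<Longrightarrow> \<forall>k. in_ZL (graded_part u k F)"
    by (simp add: in_ZL_def lookup_graded_part)
next
  assume "\<forall>k. in_ZL (graded_part u k F)"
  then have "Poly_Mapping.lookup (graded_part u (pairing m u) F) m \<in> \<int>" for m
    unfolding in_ZL_def by blast
  then show "in_ZL F"
    by (simp add: in_ZL_def lookup_graded_part)
qed

lemma sum_single_lookup_keys:
  "(\<Sum>m\<in>Poly_Mapping.keys F. Poly_Mapping.single m (Poly_Mapping.lookup F m)) = F"
proof (rule poly_mapping_eqI)
  fix k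
  have "Poly_Mapping.lookup (\<Sum>m\<in>Poly_Mapping.keys F. Poly_Mapping.single m (Poly_Mapping.lookup F m)) k
      = (\<Sum>m\<in>Poly_Mapping.keys F. Poly_Mapping.lookup F m when m = k)"
    by (simp add: lookup_sum lookup_single)
  also have "\<dots> = Poly_Mapping.lookup F k"
    by (cases "k \<in> Poly_Mapping.keys F") (simp_all add: when_def in_keys_iff)
  finally show "Poly_Mapping.lookup (\<Sum>m\<in>Poly_Mapping.keys F. Poly_Mapping.single m (Poly_Mapping.lookup F m)) k
      = Poly_Mapping.lookup F k" .
qed

lemma mutation_eq_graded_parts:
  assumes "mutation_eq \<omega> u W W'" and "pairing (omega_dual \<omega> u) u = 0"
  obtains N where "\<And>k. graded_part u k W * (1 + Xm (omega_dual \<omega> u)) ^ N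
                      = graded_part u k W' * (1 + Xm (omega_dual \<omega> u)) ^ nat (int N - k)"
proof -
  define P where "P = 1 + Xm (omega_dual \<omega> u)"
  let ?c = "Poly_Mapping.lookup W'"
  obtain N where eq: "W * P ^ N =
      (\<Sum>m\<in>Poly_Mapping.keys W'. Poly_Mapping.single m (?c m) * P ^ nat (int N - pairing m u))"
    using assms(1) unfolding mutation_eq_def P_def by blast
  have "graded_part u k W * P ^ N = graded_part u k W' * P ^ nat (int N - k)" for k
  proof -
    have "graded_part u k W * P ^ N = graded_part u k (W * P ^ N)"
      unfolding P_def by (rule graded_part_mult_power[OF assms(2), symmetric])
    also have "\<dots> = (\<Sum>m\<in>Poly_Mapping.keys W'.
        graded_part u k (Poly_Mapping.single m (?c m)) * P ^ nat (int N - pairing m u))"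
      unfolding eq graded_part_sum by (simp only: P_def graded_part_mult_power[OF assms(2)])
    also have "\<dots> = (\<Sum>m\<in>Poly_Mapping.keys W'.
        graded_part u k (Poly_Mapping.single m (?c m)) * P ^ nat (int N - k))"
      by (rule sum.cong) (auto simp: graded_part_single)
    also have "\<dots> = graded_part u k W' * P ^ nat (int N - k)"
      by (simp only: sum_distrib_right[symmetric] graded_part_sum[symmetric] sum_single_lookup_keys)
    finally show ?thesis .
  qed
  then show ?thesis
    using that unfolding P_def by blast
qed

theorem mainTheorem11:
  fixes \<omega> :: "int \<times> int \<Rightarrow> int \<times> int \<Rightarrow> int"
    and u :: "int \<times> int" and W W' :: laurent
  assumes "skew_bilinear \<omega>" and "nondegenerate \<omega>"
    and "primitive u"
    and "in_QL W" and "in_QL W'"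
    and "mutation_eq \<omega> u W W'"
  shows "in_ZL W \<longleftrightarrow> in_ZL W'"
proof -
  define n where "n = omega_dual \<omega> u"
  have "u \<noteq> 0"
    using assms(3) by (simp add: primitive_def)
  then have "n \<noteq> 0"
    unfolding n_def using assms(1,2) by (rule omega_dual_nonzero[rotated 2])
  obtain N where graded_eq:
    "\<And>k. graded_part u k W * (1 + Xm n) ^ N = graded_part u k W' * (1 + Xm n) ^ nat (int N - k)"
    using mutation_eq_graded_parts[OF assms(6) pairing_omega_dual_self[OF assms(1)]]
    unfolding n_def by blast
  have "in_ZL (graded_part u k W) \<longleftrightarrow> in_ZL (graded_part u k W')" for k
    using arg_cong[OF graded_eq[of k], of in_ZL] by (simp add: in_ZL_mult_power_iff[OF \<open>n \<noteq> 0\<close>])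
  then show ?thesis
    using in_ZL_iff_graded_parts[of W u] in_ZL_iff_graded_parts[of W' u] by simp
qed

end
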